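(* Consider the heterogeneous agents $$\dot x_i=\sum_{j=1}^N\alpha_{ij}(t)(y_j-y_i),\qquad y_i=\mathrm{sat}_i(x_i),\qquad i\in\mathcal V=\{1,\dots,N\},$$ with saturation levels ordered $s_1>s_2>\dots>s_N>0$, where the time-varying undirected graph satisfies the standing assumptions, is integrally connected over $[0,\infty)$, and satisfies $\alpha_{ij}(t)\in\{0\}\cup[\alpha_{\min},\alpha_{\max}]$ for all $i,j,t$ with constants $0<\alpha_{\min}\le\alpha_{\max}$. Then for every initial condition $x(t_0)\in\mathbb R^N$ there exists $T\ge t_0$ such that $x_i(t)\in(-s_i,s_i)$ for all $i\in\{1,\dots,N-1\}$ and all $t\ge T$. Moreover, $\limsup_{t\to\infty}|x_i(t)|\le s_N$ for all $i\in\{1,\dots,N-1\}$.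
   Context: $\mathrm{sat}_i(x)=\mathrm{sign}(x)\min\{|x|,s_i\}$. Standing assumptions: $\alpha_{ij}(t)=\alpha_{ji}(t)\ge0$, each $\alpha_{ij}$ continuous on $[0,\infty)$ except on a set of measure zero; Carathéodory solutions. Integral graph: adjacency $\bar\alpha_{ij}=1$ if $\int_0^\infty\alpha_{ij}(t)dt=\infty$, else $0$; integrally connected means the integral graph is connected. *)

theory Defs
  imports "HOL-Analysis.Analysis"
begin

definition sat :: "real \<Rightarrow> real \<Rightarrow> real" where
  "sat s x = sgn x * min \<bar>x\<bar> s"

definition standing_assumptions :: "nat \<Rightarrow> (nat \<Rightarrow> nat \<Rightarrow> real \<Rightarrow> real) \<Rightarrow> bool" where
  "standing_assumptions N \<alpha> \<longleftrightarrow>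
     (\<forall>i\<in>{1..N}. \<forall>j\<in>{1..N}. \<forall>t\<ge>0. \<alpha> i j t = \<alpha> j i t \<and> 0 \<le> \<alpha> i j t) \<and>
     (\<forall>i\<in>{1..N}. \<forall>j\<in>{1..N}.
        {t\<in>{0..}. \<not> continuous (at t within {0..}) (\<alpha> i j)} \<in> null_sets lborel)"

definition integral_edges :: "nat \<Rightarrow> (nat \<Rightarrow> nat \<Rightarrow> real \<Rightarrow> real) \<Rightarrow> (nat \<times> nat) set" where
  "integral_edges N \<alpha> = {(i, j). i \<in> {1..N} \<and> j \<in> {1..N} \<and>
      (\<integral>\<^sup>+ t. ennreal (\<alpha> i j t) * indicator {0..} t \<partial>lborel) = \<infinity>}"

definition integrally_connected :: "nat \<Rightarrow> (nat \<Rightarrow> nat \<Rightarrow> real \<Rightarrow> real) \<Rightarrow> bool" where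
  "integrally_connected N \<alpha> \<longleftrightarrow>
     (\<forall>i\<in>{1..N}. \<forall>j\<in>{1..N}. (i, j) \<in> (integral_edges N \<alpha>)\<^sup>*)"

definition agent_rhs :: "nat \<Rightarrow> (nat \<Rightarrow> nat \<Rightarrow> real \<Rightarrow> real) \<Rightarrow> (nat \<Rightarrow> real) \<Rightarrow> (real \<Rightarrow> nat \<Rightarrow> real) \<Rightarrow> nat \<Rightarrow> real \<Rightarrow> real" where
  "agent_rhs N \<alpha> s x i \<tau> = (\<Sum>j=1..N. \<alpha> i j \<tau> * (sat (s j) (x \<tau> j) - sat (s i) (x \<tau> i)))"

definition caratheodory_solution :: "nat \<Rightarrow> (nat \<Rightarrow> nat \<Rightarrow> real \<Rightarrow> real) \<Rightarrow> (nat \<Rightarrow> real) \<Rightarrow> real \<Rightarrow> (real \<Rightarrow> nat \<Rightarrow> real) \<Rightarrow> bool" where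
  "caratheodory_solution N \<alpha> s t0 x \<longleftrightarrow>
     (\<forall>i\<in>{1..N}. \<forall>t\<ge>t0.
        set_integrable lborel {t0..t} (agent_rhs N \<alpha> s x i) \<and>
        x t i = x t0 i + (LINT \<tau>:{t0..t}|lborel. agent_rhs N \<alpha> s x i \<tau>))"

end

theory Submission
  imports Defs
begin

text \<open>For \<open>s N \<le> th\<close> and \<open>th + w \<le> s (N - 1)\<close>, the sum over the leading agents \<open>1..N-1\<close> of a
  convex primitive of the clamp of \<open>x i - th\<close> to \<open>[0, w]\<close> is nonincreasing along solutions: the
  output of agent \<open>N\<close> stays below \<open>th\<close>, so the clamp may be taken of the outputs, and symmetric
  weights make the clamp-weighted sum of the right-hand sides nonpositive. Bump combinations of
  these functionals and a pigeonhole argument yield an interval just above \<open>s N\<close> that the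
  leading agents eventually avoid; integral connectivity then forbids any of them to remain
  above it. The symmetry \<open>x \<mapsto> - x\<close> gives the lower bounds.\<close>

lemma set_integrable_const_Ioc:
  fixes u v c :: real
  shows "set_integrable lborel {u<..v} (\<lambda>_. c)"
  unfolding set_integrable_def
  by (cases "u \<le> v") (auto simp: mult.commute intro!: integrable_real_indicator)

lemma set_integral_Ioc_le_const:
  fixes f :: "real \<Rightarrow> real"
  assumes "set_integrable lborel {u<..v} f" "u \<le> v" "\<And>t. t \<in> {u<..v} \<Longrightarrow> f t \<le> K"
  shows "(LINT t:{u<..v}|lborel. f t) \<le> K * (v - u)"
proof -
  have "(LINT t:{u<..v}|lborel. f t) \<le> (LINT t:{u<..v}|lborel. K)"
    by (rule set_integral_mono[OF assms(1) set_integrable_const_Ioc assms(3)])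
  also have "\<dots> = K * (v - u)"
    using assms(2) by (subst set_integral_const) auto
  finally show ?thesis .
qed

lemma abs_set_integral_Ioc_le_const:
  fixes f :: "real \<Rightarrow> real"
  assumes "set_integrable lborel {u<..v} f" "u \<le> v" "\<And>t. t \<in> {u<..v} \<Longrightarrow> \<bar>f t\<bar> \<le> K"
  shows "\<bar>LINT t:{u<..v}|lborel. f t\<bar> \<le> K * (v - u)"
proof -
  have "(LINT t:{u<..v}|lborel. f t) \<le> K * (v - u)"
    using assms by (intro set_integral_Ioc_le_const) (auto simp: abs_le_iff)
  moreover have "set_integrable lborel {u<..v} (\<lambda>t. - 1 * f t)"
    using assms(1) by blast
  then have "(LINT t:{u<..v}|lborel. - f t) \<le> K * (v - u)"
    using assms by (intro set_integral_Ioc_le_const) (auto simp: abs_le_iff)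
  ultimately show ?thesis
    using set_integral_uminus[OF assms(1)] by linarith
qed

lemma set_integrable_sum:
  fixes f :: "'i \<Rightarrow> real \<Rightarrow> real"
  assumes "\<And>i. i \<in> I \<Longrightarrow> set_integrable M A (f i)"
  shows "set_integrable M A (\<lambda>t. \<Sum>i\<in>I. f i t)"
  using assms unfolding set_integrable_def
  by (simp add: sum_distrib_left integrable_sum)

lemma set_integral_sum:
  fixes f :: "'i \<Rightarrow> real \<Rightarrow> real"
  assumes "\<And>i. i \<in> I \<Longrightarrow> set_integrable M A (f i)"
  shows "(LINT t:A|M. (\<Sum>i\<in>I. f i t)) = (\<Sum>i\<in>I. LINT t:A|M. f i t)"
  using assms unfolding set_integrable_def set_lebesgue_integral_def
  by (simp add: sum_distrib_left integral_sum)

text \<open>The nonnegative function \<open>h\<close> need not be integrable on \<open>(T, \<infinity>)\<close>, and \<open>f\<close> need not be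
  measurable: \<open>f\<close> is dominated by the measurable supremum of the truncations of \<open>h\<close>.\<close>
lemma nn_integral_Ici_finite_if_dominated:
  fixes f h :: "real \<Rightarrow> real"
  assumes bounded: "\<And>t. 0 \<le> t \<Longrightarrow> t \<le> T \<Longrightarrow> f t \<le> M"
    and dominated: "\<And>t. T < t \<Longrightarrow> f t \<le> h t"
    and h_nonneg: "\<And>t. T < t \<Longrightarrow> 0 \<le> h t"
    and h_integrable: "\<And>n::nat. set_integrable lborel {T<..T + real n} h"
    and h_integral_le: "\<And>n::nat. (LINT t:{T<..T + real n}|lborel. h t) \<le> B"
  shows "(\<integral>\<^sup>+ t. ennreal (f t) * indicator {0..} t \<partial>lborel) < \<infinity>"
proof -
  define g where "g n t = ennreal (indicator {T<..T + real n} t * h t)" for n :: nat and t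
  have g_integrable: "integrable lborel (\<lambda>t. indicator {T<..T + real n} t * h t)" for n
    using h_integrable[of n] unfolding set_integrable_def by simp
  have g_meas: "g n \<in> borel_measurable lborel" for n
    using g_integrable[of n] unfolding g_def by measurable
  have g_inc: "incseq g"
    using h_nonneg by (intro incseq_SucI le_funI) (auto simp: g_def indicator_def intro!: ennreal_leI)
  have g_integral: "(\<integral>\<^sup>+ t. g n t \<partial>lborel) \<le> ennreal B" for n
  proof -
    have "(\<integral>\<^sup>+ t. g n t \<partial>lborel) = ennreal (LINT t:{T<..T + real n}|lborel. h t)"
      unfolding g_def set_lebesgue_integral_def
      using g_integrable[of n] h_nonneg
      by (subst nn_integral_eq_integral) (auto simp: indicator_def)
    then show ?thesis
      using h_integral_le[of n] by (simp add: ennreal_leI)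
  qed
  define G where "G t = (SUP n. g n t)" for t
  have G_meas: "G \<in> borel_measurable lborel"
    unfolding G_def using g_meas by measurable
  have G_integral: "(\<integral>\<^sup>+ t. G t \<partial>lborel) \<le> ennreal B"
    unfolding G_def nn_integral_monotone_convergence_SUP[OF g_inc g_meas]
    using g_integral by (intro SUP_least) auto
  have pointwise: "ennreal (f t) * indicator {0..} t \<le> ennreal M * indicator {0..T} t + G t" for t
  proof (cases "0 \<le> t \<and> t \<le> T")
    case True
    then show ?thesis
      using bounded[of t] by (simp add: add_increasing2 ennreal_leI)
  next
    case False
    show ?thesis
    proof (cases "t < 0")
      case False
      with \<open>\<not> (0 \<le> t \<and> t \<le> T)\<close> have "T < t" by auto
      obtain n :: nat where "t - T \<le> real n"
        using real_arch_simple by blast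
      with \<open>T < t\<close> have "ennreal (f t) \<le> g n t"
        unfolding g_def using dominated[of t] by (intro ennreal_leI) auto
      also have "\<dots> \<le> G t"
        unfolding G_def by (rule SUP_upper) auto
      finally show ?thesis
        using False by (simp add: add_increasing)
    qed simp
  qed
  have "(\<integral>\<^sup>+ t. ennreal (f t) * indicator {0..} t \<partial>lborel)
      \<le> (\<integral>\<^sup>+ t. ennreal M * indicator {0..T} t + G t \<partial>lborel)"
    by (rule nn_integral_mono) (rule pointwise)
  also have "\<dots> = ennreal M * emeasure lborel {0..T} + (\<integral>\<^sup>+ t. G t \<partial>lborel)"
    using G_meas by (subst nn_integral_add) (auto simp: nn_integral_cmult_indicator)
  also have "\<dots> < \<infinity>"
    using G_integral by (auto simp: emeasure_lborel_Icc_eq ennreal_mult_less_top top.not_eq_extremum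
        intro: le_less_trans)
  finally show ?thesis .
qed

lemma sat_eq_clamp: "0 < c \<Longrightarrow> sat c z = max (- c) (min z c)"
  unfolding sat_def by (cases "z > 0"; cases "z < 0") (auto simp: sgn_if min_def max_def)

lemma sat_uminus: "sat c (- z) = - sat c z"
  unfolding sat_def by (simp add: sgn_minus)

lemma abs_sat_le: "0 < c \<Longrightarrow> \<bar>sat c z\<bar> \<le> c"
  by (auto simp: sat_eq_clamp)

lemma abs_sat_diff_le: "0 < c \<Longrightarrow> \<bar>sat c z1 - sat c z2\<bar> \<le> \<bar>z1 - z2\<bar>"
  by (auto simp: sat_eq_clamp)

text \<open>\<open>ramp th w\<close> is the clamp of \<open>z - th\<close> to \<open>[0, w]\<close> and \<open>ramp_primitive th w\<close> is its primitive
  vanishing on \<open>(-\<infinity>, th]\<close>.\<close>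
definition half_sq_pos :: "real \<Rightarrow> real" where
  "half_sq_pos u = (max u 0)\<^sup>2 / 2"

definition ramp :: "real \<Rightarrow> real \<Rightarrow> real \<Rightarrow> real" where
  "ramp th w z = max (z - th) 0 - max (z - th - w) 0"

definition ramp_primitive :: "real \<Rightarrow> real \<Rightarrow> real \<Rightarrow> real" where
  "ramp_primitive th w z = half_sq_pos (z - th) - half_sq_pos (z - th - w)"

definition bump :: "real \<Rightarrow> real \<Rightarrow> real \<Rightarrow> real" where
  "bump th w z = ramp_primitive th w z - ramp_primitive (th + w) w z
     - ramp_primitive (th + 2 * w) w z + ramp_primitive (th + 3 * w) w z"

lemma half_sq_pos_taylor:
  "0 \<le> half_sq_pos b - half_sq_pos a - max a 0 * (b - a)
    \<and> half_sq_pos b - half_sq_pos a - max a 0 * (b - a) \<le> (b - a)\<^sup>2 / 2"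
proof (cases "0 \<le> a"; cases "0 \<le> b")
  assume "0 \<le> a" "0 \<le> b"
  then have "half_sq_pos b - half_sq_pos a - max a 0 * (b - a) = (b - a)\<^sup>2 / 2"
    unfolding half_sq_pos_def by (simp add: power2_eq_square algebra_simps)
  then show ?thesis
    using zero_le_power2[of "b - a"] by linarith
next
  assume "0 \<le> a" "\<not> 0 \<le> b"
  then have eq: "half_sq_pos b - half_sq_pos a - max a 0 * (b - a) = a\<^sup>2 / 2 - a * b"
    unfolding half_sq_pos_def by (simp add: power2_eq_square algebra_simps)
  have "a * b \<le> 0"
    using \<open>0 \<le> a\<close> \<open>\<not> 0 \<le> b\<close> by (simp add: mult_nonneg_nonpos)
  moreover have "a\<^sup>2 / 2 - a * b \<le> (b - a)\<^sup>2 / 2"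
    by (simp add: power2_eq_square algebra_simps)
  moreover have "0 \<le> a\<^sup>2"
    by simp
  ultimately show ?thesis
    unfolding eq by linarith
next
  assume "\<not> 0 \<le> a" "0 \<le> b"
  then have "b\<^sup>2 \<le> (b - a)\<^sup>2"
    by (intro power_mono) auto
  then show ?thesis
    using \<open>\<not> 0 \<le> a\<close> \<open>0 \<le> b\<close> unfolding half_sq_pos_def by simp
next
  assume "\<not> 0 \<le> a" "\<not> 0 \<le> b"
  then show ?thesis
    unfolding half_sq_pos_def by simp
qed

lemma ramp_primitive_taylor:
  "ramp_primitive th w b - ramp_primitive th w a \<le> ramp th w a * (b - a) + (b - a)\<^sup>2 / 2"
  using half_sq_pos_taylor[of "b - th" "a - th"] half_sq_pos_taylor[of "b - th - w" "a - th - w"]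
  unfolding ramp_primitive_def ramp_def by (simp add: algebra_simps)

lemma ramp_mono: "0 \<le> w \<Longrightarrow> z1 \<le> z2 \<Longrightarrow> ramp th w z1 \<le> ramp th w z2"
  unfolding ramp_def by (auto simp: max_def)

lemma ramp_diff_mult_nonneg: "0 \<le> w \<Longrightarrow> 0 \<le> (ramp th w p - ramp th w q) * (p - q)"
  using ramp_mono[of w p q th] ramp_mono[of w q p th]
  by (cases "p \<le> q") (auto intro: mult_nonpos_nonpos)

lemma ramp_bounds: "0 \<le> w \<Longrightarrow> 0 \<le> ramp th w z \<and> ramp th w z \<le> w"
  unfolding ramp_def by (auto simp: max_def)

lemma ramp_sat:
  "0 \<le> th \<Longrightarrow> 0 \<le> w \<Longrightarrow> th + w \<le> c \<Longrightarrow> ramp th w (sat c z) = ramp th w z"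
  unfolding ramp_def by (cases "0 < c") (auto simp: sat_eq_clamp max_def min_def)

lemma ramp_sat_below: "0 < c \<Longrightarrow> c \<le> th \<Longrightarrow> 0 \<le> w \<Longrightarrow> ramp th w (sat c z) = 0"
  unfolding ramp_def by (simp add: sat_eq_clamp max_def min_def)

lemma ramp_primitive_nonneg: "0 \<le> w \<Longrightarrow> 0 \<le> ramp_primitive th w z"
  unfolding ramp_primitive_def half_sq_pos_def by (auto intro!: divide_right_mono power_mono)

lemma bump_eq_half_sq_pos:
  "bump th w z = half_sq_pos (z - th) - 2 * half_sq_pos (z - th - w)
     + 2 * half_sq_pos (z - th - 3 * w) - half_sq_pos (z - th - 4 * w)"
  unfolding bump_def ramp_primitive_def by (simp add: algebra_simps)

lemma bump_properties:
  assumes "0 < w"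
  shows bump_eq_0: "z \<le> th \<or> th + 4 * w \<le> z \<Longrightarrow> bump th w z = 0"
    and bump_nonneg: "0 \<le> bump th w z"
    and bump_ge: "th + w \<le> z \<Longrightarrow> z \<le> th + 3 * w \<Longrightarrow> w\<^sup>2 / 2 \<le> bump th w z"
proof -
  define u where "u = z - th"
  have b: "bump th w z = half_sq_pos u - 2 * half_sq_pos (u - w)
      + 2 * half_sq_pos (u - 3 * w) - half_sq_pos (u - 4 * w)"
    unfolding bump_eq_half_sq_pos u_def by simp
  have "(u \<le> 0 \<or> 4 * w \<le> u \<longrightarrow> bump th w z = 0) \<and> 0 \<le> bump th w z
    \<and> (w \<le> u \<and> u \<le> 3 * w \<longrightarrow> w\<^sup>2 / 2 \<le> bump th w z)"
  proof -
    consider "u \<le> 0" | "0 \<le> u" "u \<le> w" | "w \<le> u" "u \<le> 3 * w"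
      | "3 * w \<le> u" "u \<le> 4 * w" | "4 * w \<le> u"
      by linarith
    then show ?thesis
    proof cases
      case 1
      then have "bump th w z = 0"
        unfolding b half_sq_pos_def using assms by (simp add: max_def)
      with 1 assms show ?thesis
        by auto
    next
      case 2
      then have eq: "bump th w z = u\<^sup>2 / 2"
        unfolding b half_sq_pos_def using assms by (simp add: max_def)
      have "w \<le> u \<Longrightarrow> u = w" "u \<le> 0 \<Longrightarrow> u = 0" "\<not> 4 * w \<le> u"
        using 2 assms by auto
      then show ?thesis
        unfolding eq by auto
    next
      case 3
      then have eq: "bump th w z = (2 * w\<^sup>2 - (u - 2 * w)\<^sup>2) / 2"
        unfolding b half_sq_pos_def using assms
        by (simp add: max_def power2_eq_square algebra_simps)
      have "(u - 2 * w)\<^sup>2 \<le> w\<^sup>2"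
        using 3 power_mono[of "\<bar>u - 2 * w\<bar>" w 2] by auto
      then have ge: "w\<^sup>2 / 2 \<le> bump th w z"
        unfolding eq by simp
      then have "0 \<le> bump th w z"
        using zero_le_power2[of w] by linarith
      with ge 3 assms show ?thesis
        by auto
    next
      case 4
      then have "max u 0 = u" "max (u - w) 0 = u - w" "max (u - 3 * w) 0 = u - 3 * w"
        "max (u - 4 * w) 0 = 0"
        using assms by auto
      then have eq: "bump th w z = (u - 4 * w)\<^sup>2 / 2"
        unfolding b half_sq_pos_def by (simp add: power2_eq_square field_simps)
      have "0 \<le> bump th w z"
        unfolding eq by simp
      moreover have "u \<le> 3 * w \<Longrightarrow> w\<^sup>2 / 2 \<le> bump th w z"
      proof -
        assume "u \<le> 3 * w"
        with 4 have "u - 4 * w = - w"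
          by simp
        then show ?thesis
          unfolding eq by simp
      qed
      moreover have "u \<le> 0 \<or> 4 * w \<le> u \<Longrightarrow> bump th w z = 0"
        using 4 assms unfolding eq by auto
      ultimately show ?thesis
        by blast
    next
      case 5
      then have "max u 0 = u" "max (u - w) 0 = u - w" "max (u - 3 * w) 0 = u - 3 * w"
        "max (u - 4 * w) 0 = u - 4 * w"
        using assms by auto
      then have "bump th w z = 0"
        unfolding b half_sq_pos_def by (simp add: power2_eq_square field_simps)
      with 5 assms show ?thesis
        by auto
    qed
  qed
  then show "z \<le> th \<or> th + 4 * w \<le> z \<Longrightarrow> bump th w z = 0" "0 \<le> bump th w z"
    "th + w \<le> z \<Longrightarrow> z \<le> th + 3 * w \<Longrightarrow> w\<^sup>2 / 2 \<le> bump th w z"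
    unfolding u_def by auto
qed

lemma double_sum_symmetrize:
  fixes a :: "'a \<Rightarrow> 'a \<Rightarrow> real" and c p :: "'a \<Rightarrow> real"
  assumes "\<And>i j. i \<in> A \<Longrightarrow> j \<in> A \<Longrightarrow> a i j = a j i"
  shows "(\<Sum>i\<in>A. \<Sum>j\<in>A. a i j * (c i * (p j - p i)))
    = - (\<Sum>i\<in>A. \<Sum>j\<in>A. a i j * ((c i - c j) * (p i - p j))) / 2"
proof -
  let ?S = "\<Sum>i\<in>A. \<Sum>j\<in>A. a i j * (c i * (p j - p i))"
  have "?S = (\<Sum>j\<in>A. \<Sum>i\<in>A. a i j * (c i * (p j - p i)))"
    by (rule sum.swap)
  also have "\<dots> = (\<Sum>i\<in>A. \<Sum>j\<in>A. a i j * (c j * (p i - p j)))"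
    using assms by (intro sum.cong refl) auto
  finally have "2 * ?S = ?S + (\<Sum>i\<in>A. \<Sum>j\<in>A. a i j * (c j * (p i - p j)))"
    by simp
  also have "\<dots> = - (\<Sum>i\<in>A. \<Sum>j\<in>A. a i j * ((c i - c j) * (p i - p j)))"
    by (simp add: sum.distrib[symmetric] sum_negf[symmetric] algebra_simps)
  finally show ?thesis
    by simp
qed

lemma sum_le_member_if_nonpos:
  fixes f :: "'a \<Rightarrow> real"
  assumes "finite A" "p \<in> A" "\<And>i. i \<in> A \<Longrightarrow> f i \<le> 0"
  shows "sum f A \<le> f p"
proof -
  have "sum f A = f p + sum f (A - {p})"
    using assms by (simp add: sum.remove)
  moreover have "sum f (A - {p}) \<le> 0"
    using assms by (intro sum_nonpos) auto
  ultimately show ?thesis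
    by simp
qed

lemma rtrancl_leaves_set:
  assumes "(u, v) \<in> E\<^sup>*" "u \<in> H" "v \<notin> H"
  shows "\<exists>p q. (p, q) \<in> E \<and> p \<in> H \<and> q \<notin> H"
  using assms by (induction rule: rtrancl_induct) auto

lemma exists_window_avoiding:
  fixes z :: "'a \<Rightarrow> real"
  assumes "finite A" "card A < n" "0 < d"
  shows "\<exists>k<n. \<forall>i\<in>A. \<not> (c + d * real k < z i \<and> z i < c + d * real k + d)"
proof -
  define g where "g i = nat \<lfloor>(z i - c) / d\<rfloor>" for i
  have "\<not> {0..<n} \<subseteq> g ` A"
  proof
    assume "{0..<n} \<subseteq> g ` A"
    then have "card {0..<n} \<le> card (g ` A)"
      using assms(1) by (intro card_mono) auto
    then show False
      using card_image_le[OF assms(1), of g] assms(2) by simp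
  qed
  then obtain k where k: "k < n" "k \<notin> g ` A"
    by (auto simp: subset_eq)
  have "\<not> (c + d * real k < z i \<and> z i < c + d * real k + d)" if "i \<in> A" for i
  proof
    assume "c + d * real k < z i \<and> z i < c + d * real k + d"
    then have "real k < (z i - c) / d" "(z i - c) / d < real k + 1"
      using assms(3) by (simp_all add: field_simps)
    then have "\<lfloor>(z i - c) / d\<rfloor> = int k"
      by (simp add: floor_eq_iff)
    then have "g i = k"
      unfolding g_def by simp
    with k that show False
      by auto
  qed
  with k show ?thesis
    by auto
qed

text \<open>A discrete substitute for a nonpositive derivative: subdividing \<open>[u, v]\<close> into \<open>n\<close> pieces
  bounds \<open>W v - W u\<close> by \<open>K (v - u)\<^sup>2 / n\<close>.\<close>
lemma antimono_if_increments_quadratic: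
  fixes W :: "real \<Rightarrow> real"
  assumes H: "\<And>u v. a \<le> u \<Longrightarrow> u \<le> v \<Longrightarrow> W v - W u \<le> K * (v - u)\<^sup>2"
    and uv: "a \<le> u" "u \<le> v"
  shows "W v \<le> W u"
proof (rule ccontr)
  assume "\<not> W v \<le> W u"
  then have pos: "W v - W u > 0"
    by simp
  have telescope: "W (u + real n * h) - W u \<le> real n * (K * h\<^sup>2)" if "0 \<le> h" for n h
  proof (induction n)
    case (Suc n)
    have "W (u + real (Suc n) * h) - W (u + real n * h)
        \<le> K * ((u + real (Suc n) * h) - (u + real n * h))\<^sup>2"
      using uv that by (intro H) (auto simp: algebra_simps add_increasing2)
    then show ?case
      using Suc by (simp add: algebra_simps)
  qed simp
  obtain n :: nat where n: "K * (v - u)\<^sup>2 / (W v - W u) < real n" "0 < n"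
    using reals_Archimedean2[of "max 0 (K * (v - u)\<^sup>2 / (W v - W u))"]
    by (metis max_less_iff_conj of_nat_0_less_iff)
  have "W v - W u \<le> real n * (K * ((v - u) / n)\<^sup>2)"
    using telescope[of "(v - u) / n" n] uv n by simp
  also have "\<dots> = K * (v - u)\<^sup>2 / n"
    using n by (simp add: power2_eq_square field_simps)
  also have "\<dots> < W v - W u"
    using n pos by (simp add: field_simps mult.commute)
  finally show False
    by simp
qed

lemma antimono_bdd_below_tendsto:
  fixes W :: "real \<Rightarrow> real"
  assumes mono: "\<And>u v. a \<le> u \<Longrightarrow> u \<le> v \<Longrightarrow> W v \<le> W u"
    and bdd: "\<And>t. a \<le> t \<Longrightarrow> m \<le> W t"
  shows "(W \<longlongrightarrow> Inf (W ` {a..})) at_top"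
proof (rule decreasing_tendsto)
  have bdd': "bdd_below (W ` {a..})"
    using bdd by (auto intro!: bdd_belowI)
  then show "\<forall>\<^sub>F t in at_top. Inf (W ` {a..}) \<le> W t"
    unfolding eventually_at_top_linorder by (auto intro!: exI[of _ a] cInf_lower)
  fix y
  assume "Inf (W ` {a..}) < y"
  then obtain T where "a \<le> T" "W T < y"
    using cInf_less_iff[OF _ bdd'] by auto
  then show "\<forall>\<^sub>F t in at_top. W t < y"
    unfolding eventually_at_top_linorder using mono by (meson order.trans le_less_trans)
qed

lemma continuous_on_avoiding_interval_same_side:
  fixes f :: "real \<Rightarrow> real"
  assumes cont: "continuous_on {u..v} f" and "u \<le> v" "a < b"
    and avoid: "\<And>t. t \<in> {u..v} \<Longrightarrow> f t < a \<or> b < f t"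
  shows "b < f v \<longleftrightarrow> b < f u"
proof
  assume "b < f v"
  show "b < f u"
  proof (rule ccontr)
    assume "\<not> b < f u"
    then have "f u < a"
      using avoid[of u] \<open>u \<le> v\<close> by auto
    then obtain t where "u \<le> t" "t \<le> v" "f t = a"
      using IVT'[of f u a v] \<open>b < f v\<close> \<open>a < b\<close> \<open>u \<le> v\<close> cont by auto
    then show False
      using avoid[of t] \<open>a < b\<close> by auto
  qed
next
  assume "b < f u"
  show "b < f v"
  proof (rule ccontr)
    assume "\<not> b < f v"
    then have "f v < a"
      using avoid[of v] \<open>u \<le> v\<close> by auto
    then obtain t where "u \<le> t" "t \<le> v" "f t = a"
      using IVT2'[of f v a u] \<open>b < f u\<close> \<open>a < b\<close> \<open>u \<le> v\<close> cont by auto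
    then show False
      using avoid[of t] \<open>a < b\<close> by auto
  qed
qed

locale saturated_network =
  fixes N :: nat and s :: "nat \<Rightarrow> real" and \<alpha> :: "nat \<Rightarrow> nat \<Rightarrow> real \<Rightarrow> real"
    and amax t0 :: real and x :: "real \<Rightarrow> nat \<Rightarrow> real"
  assumes two_le_N: "2 \<le> N"
    and s_decreasing: "\<And>i j. 1 \<le> i \<Longrightarrow> i < j \<Longrightarrow> j \<le> N \<Longrightarrow> s j < s i"
    and s_pos: "0 < s N"
    and \<alpha>_sym: "\<And>i j t. i \<in> {1..N} \<Longrightarrow> j \<in> {1..N} \<Longrightarrow> 0 \<le> t \<Longrightarrow> \<alpha> i j t = \<alpha> j i t"
    and \<alpha>_nonneg: "\<And>i j t. i \<in> {1..N} \<Longrightarrow> j \<in> {1..N} \<Longrightarrow> 0 \<le> t \<Longrightarrow> 0 \<le> \<alpha> i j t"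
    and \<alpha>_le: "\<And>i j t. i \<in> {1..N} \<Longrightarrow> j \<in> {1..N} \<Longrightarrow> 0 \<le> t \<Longrightarrow> \<alpha> i j t \<le> amax"
    and connected: "integrally_connected N \<alpha>"
    and t0_nonneg: "0 \<le> t0"
    and solution: "caratheodory_solution N \<alpha> s t0 x"
begin

abbreviation rhs :: "nat \<Rightarrow> real \<Rightarrow> real" where
  "rhs i \<tau> \<equiv> agent_rhs N \<alpha> s x i \<tau>"

abbreviation y :: "real \<Rightarrow> nat \<Rightarrow> real" where
  "y \<tau> i \<equiv> sat (s i) (x \<tau> i)"

definition speed :: real where
  "speed = 2 * real N * amax * s 1"

lemma s_bounds: "i \<in> {1..N} \<Longrightarrow> s N \<le> s i \<and> s i \<le> s 1 \<and> 0 < s i"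
  using s_decreasing[of i N] s_decreasing[of 1 i] s_pos
  by (cases "i = N"; cases "i = 1") force+

lemma s_bounds_below_N:
  assumes "i \<in> {1..<N}"
  shows "s N < s i \<and> s (N - 1) \<le> s i"
proof -
  have "i = N - 1 \<or> i < N - 1"
    using assms by auto
  then show ?thesis
    using assms s_decreasing[of i N] s_decreasing[of i "N - 1"] by auto
qed

lemma amax_nonneg: "0 \<le> amax"
  using \<alpha>_nonneg[of 1 1 0] \<alpha>_le[of 1 1 0] two_le_N by auto

lemma speed_nonneg: "0 \<le> speed"
  using amax_nonneg s_bounds[of 1] two_le_N unfolding speed_def by auto

lemma abs_rhs_le:
  assumes i: "i \<in> {1..N}" and "0 \<le> \<tau>"
  shows "\<bar>rhs i \<tau>\<bar> \<le> speed"
proof -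
  have "\<bar>rhs i \<tau>\<bar> \<le> (\<Sum>j=1..N. \<bar>\<alpha> i j \<tau> * (y \<tau> j - y \<tau> i)\<bar>)"
    unfolding agent_rhs_def by (rule sum_abs)
  also have "\<dots> \<le> (\<Sum>j=1..N. amax * (2 * s 1))"
  proof (rule sum_mono)
    fix j
    assume j: "j \<in> {1..N}"
    have "\<bar>y \<tau> j - y \<tau> i\<bar> \<le> 2 * s 1"
      using abs_sat_le[of "s i" "x \<tau> i"] abs_sat_le[of "s j" "x \<tau> j"] s_bounds[OF i] s_bounds[OF j]
      by linarith
    moreover have "\<bar>\<alpha> i j \<tau>\<bar> \<le> amax"
      using \<alpha>_nonneg[OF i j] \<alpha>_le[OF i j] \<open>0 \<le> \<tau>\<close> by auto
    ultimately show "\<bar>\<alpha> i j \<tau> * (y \<tau> j - y \<tau> i)\<bar> \<le> amax * (2 * s 1)"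
      unfolding abs_mult by (intro mult_mono) auto
  qed
  also have "\<dots> = speed"
    unfolding speed_def by simp
  finally show ?thesis .
qed

lemma increment_eq_integral:
  assumes "t0 \<le> u" "u \<le> v" "i \<in> {1..N}"
  shows "set_integrable lborel {u<..v} (rhs i)"
    and "x v i - x u i = (LINT \<tau>:{u<..v}|lborel. rhs i \<tau>)"
proof -
  have sol: "set_integrable lborel {t0..t} (rhs i) \<and> x t i = x t0 i + (LINT \<tau>:{t0..t}|lborel. rhs i \<tau>)"
    if "t0 \<le> t" for t
    using solution assms(3) that unfolding caratheodory_solution_def by blast
  show integrable: "set_integrable lborel {u<..v} (rhs i)"
    by (rule set_integrable_subset[of _ "{t0..v}"]) (use sol[of v] assms in auto)
  have "{t0..v} = {t0..u} \<union> {u<..v}" "{t0..u} \<inter> {u<..v} = {}"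
    using assms by auto
  then have "(LINT \<tau>:{t0..v}|lborel. rhs i \<tau>)
      = (LINT \<tau>:{t0..u}|lborel. rhs i \<tau>) + (LINT \<tau>:{u<..v}|lborel. rhs i \<tau>)"
    using set_integral_Un[of "{t0..u}" "{u<..v}" lborel "rhs i"] sol[of u] integrable assms by auto
  then show "x v i - x u i = (LINT \<tau>:{u<..v}|lborel. rhs i \<tau>)"
    using sol[of u] sol[of v] assms by simp
qed

lemma weighted_increment_eq_integral:
  assumes "t0 \<le> u" "u \<le> v" "A \<subseteq> {1..N}"
  shows "set_integrable lborel {u<..v} (\<lambda>\<tau>. \<Sum>i\<in>A. c i * rhs i \<tau>)"
    and "(\<Sum>i\<in>A. c i * (x v i - x u i)) = (LINT \<tau>:{u<..v}|lborel. \<Sum>i\<in>A. c i * rhs i \<tau>)"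
proof -
  have integrable: "set_integrable lborel {u<..v} (\<lambda>\<tau>. c i * rhs i \<tau>)" if "i \<in> A" for i
    using increment_eq_integral(1)[OF assms(1,2)] assms(3) that by blast
  then show "set_integrable lborel {u<..v} (\<lambda>\<tau>. \<Sum>i\<in>A. c i * rhs i \<tau>)"
    by (rule set_integrable_sum)
  have "(\<Sum>i\<in>A. c i * (x v i - x u i)) = (\<Sum>i\<in>A. LINT \<tau>:{u<..v}|lborel. c i * rhs i \<tau>)"
    using increment_eq_integral(2)[OF assms(1,2)] assms(3) by (intro sum.cong) auto
  also have "\<dots> = (LINT \<tau>:{u<..v}|lborel. \<Sum>i\<in>A. c i * rhs i \<tau>)"
    using integrable by (rule set_integral_sum[symmetric])
  finally show "(\<Sum>i\<in>A. c i * (x v i - x u i)) = (LINT \<tau>:{u<..v}|lborel. \<Sum>i\<in>A. c i * rhs i \<tau>)" .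
qed

lemma abs_increment_le:
  assumes "t0 \<le> u" "u \<le> v" "i \<in> {1..N}"
  shows "\<bar>x v i - x u i\<bar> \<le> speed * (v - u)"
  unfolding increment_eq_integral(2)[OF assms]
  using assms t0_nonneg abs_rhs_le
  by (intro abs_set_integral_Ioc_le_const increment_eq_integral(1)[OF assms]) auto

lemma continuous_on_trajectory: "i \<in> {1..N} \<Longrightarrow> continuous_on {t0..} (\<lambda>t. x t i)"
proof (intro lipschitz_on_continuous_on lipschitz_onI)
  fix u v
  assume "i \<in> {1..N}" "u \<in> {t0..}" "v \<in> {t0..}"
  then show "dist (x u i) (x v i) \<le> speed * dist u v"
    using abs_increment_le[of u v i] abs_increment_le[of v u i]
    by (cases "u \<le> v") (auto simp: dist_real_def abs_minus_commute)
qed (rule speed_nonneg)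

text \<open>With the outputs frozen at time \<open>u\<close> the weighted sum is nonpositive by symmetry of the
  weights and monotonicity of \<open>ramp\<close>; unfreezing them costs \<open>O(\<tau> - u)\<close>.\<close>
lemma ramp_weighted_rhs_le:
  assumes w: "0 \<le> w" and u: "t0 \<le> u" "u \<le> \<tau>"
  shows "(\<Sum>i\<in>{1..N}. ramp th w (y u i) * rhs i \<tau>) \<le> 2 * real N ^ 2 * amax * w * speed * (\<tau> - u)"
proof -
  define c where "c i = ramp th w (y u i)" for i
  define e where "e i j = (y \<tau> j - y u j) - (y \<tau> i - y u i)" for i j
  have \<tau>: "0 \<le> \<tau>"
    using t0_nonneg u by linarith
  have split: "(\<Sum>i\<in>{1..N}. c i * rhs i \<tau>)
      = (\<Sum>i\<in>{1..N}. \<Sum>j\<in>{1..N}. \<alpha> i j \<tau> * (c i * (y u j - y u i)))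
        + (\<Sum>i\<in>{1..N}. \<Sum>j\<in>{1..N}. \<alpha> i j \<tau> * (c i * e i j))"
    unfolding agent_rhs_def e_def by (simp add: sum_distrib_left sum.distrib[symmetric] algebra_simps)
  have "0 \<le> (\<Sum>i\<in>{1..N}. \<Sum>j\<in>{1..N}. \<alpha> i j \<tau> * ((c i - c j) * (y u i - y u j)))"
  proof (intro sum_nonneg)
    fix i j
    assume "i \<in> {1..N}" "j \<in> {1..N}"
    then have "0 \<le> \<alpha> i j \<tau>"
      using \<alpha>_nonneg \<tau> by auto
    moreover have "0 \<le> (c i - c j) * (y u i - y u j)"
      unfolding c_def by (rule ramp_diff_mult_nonneg[OF w])
    ultimately show "0 \<le> \<alpha> i j \<tau> * ((c i - c j) * (y u i - y u j))"
      by simp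
  qed
  then have frozen: "(\<Sum>i\<in>{1..N}. \<Sum>j\<in>{1..N}. \<alpha> i j \<tau> * (c i * (y u j - y u i))) \<le> 0"
    using \<alpha>_sym \<tau> by (subst double_sum_symmetrize) auto
  have "(\<Sum>i\<in>{1..N}. \<Sum>j\<in>{1..N}. \<alpha> i j \<tau> * (c i * e i j))
      \<le> (\<Sum>i\<in>{1..N}. \<Sum>j\<in>{1..N}. amax * (w * (2 * speed * (\<tau> - u))))"
  proof (intro sum_mono)
    fix i j
    assume i: "i \<in> {1..N}" and j: "j \<in> {1..N}"
    have change: "\<bar>y \<tau> k - y u k\<bar> \<le> speed * (\<tau> - u)" if "k \<in> {1..N}" for k
      using abs_sat_diff_le[of "s k" "x \<tau> k" "x u k"] abs_increment_le[OF u that] s_bounds[OF that]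
      by linarith
    have "\<bar>e i j\<bar> \<le> 2 * speed * (\<tau> - u)"
      unfolding e_def using change[OF i] change[OF j] by linarith
    moreover have "\<bar>\<alpha> i j \<tau>\<bar> \<le> amax"
      using \<alpha>_nonneg[OF i j \<tau>] \<alpha>_le[OF i j \<tau>] by auto
    moreover have "\<bar>c i\<bar> \<le> w"
      unfolding c_def using ramp_bounds[OF w] by auto
    ultimately have "\<bar>\<alpha> i j \<tau> * (c i * e i j)\<bar> \<le> amax * (w * (2 * speed * (\<tau> - u)))"
      unfolding abs_mult by (intro mult_mono) auto
    then show "\<alpha> i j \<tau> * (c i * e i j) \<le> amax * (w * (2 * speed * (\<tau> - u)))"
      by linarith
  qed
  also have "\<dots> = 2 * real N ^ 2 * amax * w * speed * (\<tau> - u)"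
    by (simp add: power2_eq_square)
  finally show ?thesis
    using split frozen unfolding c_def by linarith
qed

lemma lyapunov_increment_le:
  assumes w: "0 \<le> w" and th: "s N \<le> th" "th + w \<le> s (N - 1)" and uv: "t0 \<le> u" "u \<le> v"
  shows "(\<Sum>i\<in>{1..<N}. ramp_primitive th w (x v i)) - (\<Sum>i\<in>{1..<N}. ramp_primitive th w (x u i))
    \<le> (2 * real N ^ 2 * amax * w * speed + real N * speed\<^sup>2 / 2) * (v - u)\<^sup>2"
proof -
  define c where "c i = ramp th w (y u i)" for i
  define D where "D i = x v i - x u i" for i
  have c_eq: "ramp th w (x u i) = c i" if "i \<in> {1..<N}" for i
    using ramp_sat[of th w "s i" "x u i"] s_bounds_below_N[OF that] th w s_pos
    unfolding c_def by auto
  have c_N: "c N = 0"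
    unfolding c_def using ramp_sat_below[of "s N" th w] s_pos th w by auto
  define K where "K = 2 * real N ^ 2 * amax * w * speed"
  have "0 \<le> K"
    unfolding K_def using w amax_nonneg speed_nonneg by simp
  have rate: "(\<Sum>i\<in>{1..N}. c i * rhs i \<tau>) \<le> K * (v - u)" if "\<tau> \<in> {u<..v}" for \<tau>
  proof -
    have "(\<Sum>i\<in>{1..N}. c i * rhs i \<tau>) \<le> K * (\<tau> - u)"
      unfolding c_def K_def using ramp_weighted_rhs_le[OF w uv(1)] that by auto
    also have "\<dots> \<le> K * (v - u)"
      using that \<open>0 \<le> K\<close> by (intro mult_left_mono) auto
    finally show ?thesis .
  qed
  have drift: "(\<Sum>i\<in>{1..N}. c i * D i) \<le> K * (v - u) * (v - u)"
    unfolding D_def weighted_increment_eq_integral(2)[OF uv order.refl]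
    using weighted_increment_eq_integral(1)[OF uv order.refl] uv(2) rate
    by (rule set_integral_Ioc_le_const)
  have "(D i)\<^sup>2 / 2 \<le> (speed * (v - u))\<^sup>2 / 2" if "i \<in> {1..<N}" for i
  proof -
    have "\<bar>D i\<bar> \<le> speed * (v - u)"
      unfolding D_def using abs_increment_le[OF uv] that by auto
    then have "\<bar>D i\<bar>\<^sup>2 \<le> (speed * (v - u))\<^sup>2"
      by (intro power_mono) auto
    then show ?thesis
      by simp
  qed
  then have "(\<Sum>i\<in>{1..<N}. (D i)\<^sup>2 / 2) \<le> real (N - 1) * ((speed * (v - u))\<^sup>2 / 2)"
    using sum_mono[of "{1..<N}" "\<lambda>i. (D i)\<^sup>2 / 2" "\<lambda>_. (speed * (v - u))\<^sup>2 / 2"] by simp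
  also have "\<dots> \<le> real N * ((speed * (v - u))\<^sup>2 / 2)"
    by (intro mult_right_mono) auto
  finally have quadratic: "(\<Sum>i\<in>{1..<N}. (D i)\<^sup>2 / 2) \<le> real N * speed\<^sup>2 / 2 * (v - u)\<^sup>2"
    by (simp add: power_mult_distrib)
  have "(\<Sum>i\<in>{1..<N}. ramp_primitive th w (x v i)) - (\<Sum>i\<in>{1..<N}. ramp_primitive th w (x u i))
      = (\<Sum>i\<in>{1..<N}. ramp_primitive th w (x v i) - ramp_primitive th w (x u i))"
    by (simp add: sum_subtractf)
  also have "\<dots> \<le> (\<Sum>i\<in>{1..<N}. c i * D i + (D i)\<^sup>2 / 2)"
    using ramp_primitive_taylor c_eq unfolding D_def by (intro sum_mono) (metis mult.commute)
  also have "\<dots> = (\<Sum>i\<in>{1..N}. c i * D i) + (\<Sum>i\<in>{1..<N}. (D i)\<^sup>2 / 2)"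
  proof -
    have "{1..N} = insert N {1..<N}"
      using two_le_N by auto
    then show ?thesis
      using c_N by (simp add: sum.distrib)
  qed
  also have "\<dots> \<le> K * (v - u) * (v - u) + real N * speed\<^sup>2 / 2 * (v - u)\<^sup>2"
    using drift quadratic by (rule add_mono)
  also have "\<dots> = (2 * real N ^ 2 * amax * w * speed + real N * speed\<^sup>2 / 2) * (v - u)\<^sup>2"
    unfolding K_def by (simp add: power2_eq_square algebra_simps)
  finally show ?thesis .
qed

lemma lyapunov_antimono:
  assumes "0 \<le> w" "s N \<le> th" "th + w \<le> s (N - 1)" "t0 \<le> u" "u \<le> v"
  shows "(\<Sum>i\<in>{1..<N}. ramp_primitive th w (x v i)) \<le> (\<Sum>i\<in>{1..<N}. ramp_primitive th w (x u i))"
  using antimono_if_increments_quadratic[OF lyapunov_increment_le[OF assms(1-3)] assms(4,5)] .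

lemma bump_sum_convergent:
  assumes w: "0 < w" and th: "s N \<le> th" "th + 4 * w \<le> s (N - 1)"
  shows "\<exists>l. ((\<lambda>t. \<Sum>i\<in>{1..<N}. bump th w (x t i)) \<longlongrightarrow> l) at_top"
proof -
  define W where "W m t = (\<Sum>i\<in>{1..<N}. ramp_primitive (th + real m * w) w (x t i))" for m :: nat and t
  have lim: "\<exists>l. (W m \<longlongrightarrow> l) at_top" if "m \<le> 3" for m
  proof -
    have "real m * w \<le> 3 * w" "0 \<le> real m * w"
      using that w by (auto intro: mult_right_mono)
    then have "s N \<le> th + real m * w" "th + real m * w + w \<le> s (N - 1)"
      using th w by linarith+
    then have "W m v \<le> W m u" if "t0 \<le> u" "u \<le> v" for u v
      unfolding W_def using w that by (intro lyapunov_antimono) auto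
    moreover have "0 \<le> W m t" for t
      unfolding W_def using w by (intro sum_nonneg ramp_primitive_nonneg) auto
    ultimately have "(W m \<longlongrightarrow> Inf (W m ` {t0..})) at_top"
      by (intro antimono_bdd_below_tendsto[of t0 _ 0])
    then show ?thesis ..
  qed
  obtain l0 l1 l2 l3 where "(W 0 \<longlongrightarrow> l0) at_top" "(W 1 \<longlongrightarrow> l1) at_top"
    "(W 2 \<longlongrightarrow> l2) at_top" "(W 3 \<longlongrightarrow> l3) at_top"
    using lim[of 0] lim[of 1] lim[of 2] lim[of 3] by auto
  then have "((\<lambda>t. W 0 t - W 1 t - W 2 t + W 3 t) \<longlongrightarrow> l0 - l1 - l2 + l3) at_top"
    by (intro tendsto_intros)
  moreover have "W 0 t - W 1 t - W 2 t + W 3 t = (\<Sum>i\<in>{1..<N}. bump th w (x t i))" for t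
    unfolding W_def bump_def by (simp add: sum.distrib sum_subtractf algebra_simps)
  ultimately show ?thesis
    by auto
qed

text \<open>Among the \<open>N\<close> disjoint windows of width \<open>4 w\<close> above \<open>s N\<close>, at every time one contains none of
  the \<open>N - 1\<close> leading agents, so one window is empty at arbitrarily large times. Its bump sum
  converges, hence to \<open>0\<close>, which eventually clears the middle half of that window.\<close>
lemma eventually_gap:
  assumes c: "s N < c" "c \<le> s (N - 1)"
  shows "\<exists>a b. s N < a \<and> a < b \<and> b < c \<and> (\<forall>\<^sub>F t in at_top. \<forall>i\<in>{1..<N}. x t i < a \<or> b < x t i)"
proof -
  define w where "w = (c - s N) / (4 * real N)"
  have w: "0 < w"
    unfolding w_def using c two_le_N by auto
  define th where "th k = s N + 4 * w * real k" for k :: nat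
  define f where "f k = (\<lambda>t. \<Sum>i\<in>{1..<N}. bump (th k) w (x t i))" for k
  have th_bounds: "s N \<le> th k \<and> th k + 4 * w \<le> c" if "k < N" for k
  proof -
    have "4 * w * (real k + 1) \<le> 4 * w * real N"
      using that w by (intro mult_left_mono) auto
    moreover have "4 * w * real N = c - s N"
      unfolding w_def using two_le_N by simp
    ultimately show ?thesis
      unfolding th_def using w by (simp add: algebra_simps)
  qed
  have "\<exists>k\<in>{..<N}. f k t = 0" for t
  proof -
    obtain k where k: "k < N"
      and avoid: "\<forall>i\<in>{1..<N}. \<not> (th k < x t i \<and> x t i < th k + 4 * w)"
      using exists_window_avoiding[of "{1..<N}" N "4 * w" "s N" "\<lambda>i. x t i"] w two_le_N
      unfolding th_def by auto
    have "f k t = 0"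
      unfolding f_def using avoid bump_eq_0[OF w] by (intro sum.neutral) (meson not_le)
    with k show ?thesis
      by auto
  qed
  then have "\<exists>\<^sub>F t in at_top. \<exists>k\<in>{..<N}. f k t = 0"
    using trivial_limit_at_top_linorder by (intro eventually_frequently always_eventually) blast+
  then have "\<exists>k\<in>{..<N}. \<exists>\<^sub>F t in at_top. f k t = 0"
    by (rule frequently_bex_finite[OF finite_lessThan])
  then obtain k where k: "k < N" and frequently_zero: "\<exists>\<^sub>F t in at_top. f k t = 0"
    by auto
  have "\<exists>l. (f k \<longlongrightarrow> l) at_top"
    unfolding f_def using th_bounds[OF k] c by (intro bump_sum_convergent[OF w]) auto
  then obtain l where lim: "(f k \<longlongrightarrow> l) at_top" ..
  have "l = 0"
  proof (rule ccontr)
    assume "l \<noteq> 0"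
    then have "\<forall>\<^sub>F t in at_top. f k t \<noteq> 0"
      using tendsto_imp_eventually_ne[OF lim] by simp
    with frequently_zero show False
      by (simp add: frequently_def)
  qed
  moreover have "0 < w\<^sup>2 / 2"
    using w by simp
  ultimately have small: "\<forall>\<^sub>F t in at_top. f k t < w\<^sup>2 / 2"
    using lim by (intro order_tendstoD(2)) auto
  have "\<forall>\<^sub>F t in at_top. \<forall>i\<in>{1..<N}. x t i < th k + w \<or> th k + 3 * w < x t i"
    using small
  proof eventually_elim
    case (elim t)
    show ?case
    proof (intro ballI)
      fix i
      assume i: "i \<in> {1..<N}"
      have "bump (th k) w (x t i) \<le> f k t"
        unfolding f_def using i bump_nonneg[OF w] by (intro member_le_sum) auto
      with elim bump_ge[OF w, of "th k" "x t i"] show "x t i < th k + w \<or> th k + 3 * w < x t i"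
        by linarith
    qed
  qed
  moreover have "s N < th k + w" "th k + 3 * w < c"
    using th_bounds[OF k] w by auto
  ultimately show ?thesis
    using w by (intro exI[of _ "th k + w"] exI[of _ "th k + 3 * w"]) auto
qed

lemma gap_side_invariant:
  assumes "t0 \<le> T" "a < b"
    and gap: "\<And>t i. T \<le> t \<Longrightarrow> i \<in> {1..<N} \<Longrightarrow> x t i < a \<or> b < x t i"
    and "T \<le> t" "i \<in> {1..<N}"
  shows "b < x t i \<longleftrightarrow> b < x T i"
proof -
  have "continuous_on {T..t} (\<lambda>t. x t i)"
    using assms by (auto intro: continuous_on_subset[OF continuous_on_trajectory])
  then show ?thesis
    using continuous_on_avoiding_interval_same_side[of T t "\<lambda>t. x t i" a b] assms by auto
qed

lemma separated_set_drift:
  assumes H: "H \<subseteq> {1..N}" "p \<in> H" "q \<in> {1..N} - H" and "0 \<le> \<tau>" "0 \<le> d"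
    and separated: "\<And>i j. i \<in> H \<Longrightarrow> j \<in> {1..N} - H \<Longrightarrow> y \<tau> j - y \<tau> i \<le> - d"
  shows "(\<Sum>i\<in>H. rhs i \<tau>) \<le> - d * \<alpha> p q \<tau>"
proof -
  define Q where "Q = {1..N} - H"
  have fin: "finite H" "finite Q"
    using H(1) finite_subset unfolding Q_def by auto
  have \<alpha>_nonneg': "0 \<le> \<alpha> i j \<tau>" if "i \<in> H" "j \<in> Q" for i j
    using that H(1) \<alpha>_nonneg \<open>0 \<le> \<tau>\<close> unfolding Q_def by auto
  have outflow_nonpos: "\<alpha> i j \<tau> * (y \<tau> j - y \<tau> i) \<le> 0" if "i \<in> H" "j \<in> Q" for i j
    using \<alpha>_nonneg'[OF that] separated[of i j] that \<open>0 \<le> d\<close> unfolding Q_def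
    by (intro mult_nonneg_nonpos) auto
  have "{1..N} = H \<union> Q" "H \<inter> Q = {}"
    using H(1) unfolding Q_def by auto
  then have "(\<Sum>i\<in>H. rhs i \<tau>) = (\<Sum>i\<in>H. \<Sum>j\<in>H. \<alpha> i j \<tau> * (1 * (y \<tau> j - y \<tau> i)))
      + (\<Sum>i\<in>H. \<Sum>j\<in>Q. \<alpha> i j \<tau> * (y \<tau> j - y \<tau> i))"
    unfolding agent_rhs_def by (simp add: sum.union_disjoint[OF fin] sum.distrib)
  also have "(\<Sum>i\<in>H. \<Sum>j\<in>H. \<alpha> i j \<tau> * (1 * (y \<tau> j - y \<tau> i))) = 0"
  proof -
    have "\<alpha> i j \<tau> = \<alpha> j i \<tau>" if "i \<in> H" "j \<in> H" for i j
      using that H(1) \<alpha>_sym \<open>0 \<le> \<tau>\<close> by blast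
    then show ?thesis
      by (subst double_sum_symmetrize) auto
  qed
  also have "(\<Sum>i\<in>H. \<Sum>j\<in>Q. \<alpha> i j \<tau> * (y \<tau> j - y \<tau> i)) \<le> (\<Sum>j\<in>Q. \<alpha> p j \<tau> * (y \<tau> j - y \<tau> p))"
    using fin outflow_nonpos H(2) by (intro sum_le_member_if_nonpos sum_nonpos) auto
  also have "\<dots> \<le> \<alpha> p q \<tau> * (y \<tau> q - y \<tau> p)"
    using fin outflow_nonpos H unfolding Q_def by (intro sum_le_member_if_nonpos) auto
  also have "\<dots> \<le> \<alpha> p q \<tau> * (- d)"
    using \<alpha>_nonneg' separated H unfolding Q_def by (intro mult_left_mono) auto
  finally show ?thesis
    by (simp add: mult.commute)
qed

text \<open>If some leading agent were above the gap, the set \<open>H\<close> of such agents would be left by an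
  edge of the integral graph. Across it the outputs differ by at least \<open>b - a\<close>, so the sum of the
  states in \<open>H\<close> decreases at least at rate \<open>(b - a) \<alpha> p q\<close> while staying above \<open>b |H|\<close>;
  hence \<open>\<alpha> p q\<close> would be integrable.\<close>
lemma nothing_above_gap:
  assumes T: "t0 \<le> T" and ab: "s N < a" "a < b" "b < s (N - 1)"
    and gap: "\<And>t i. T \<le> t \<Longrightarrow> i \<in> {1..<N} \<Longrightarrow> x t i < a \<or> b < x t i"
    and i: "i \<in> {1..<N}"
  shows "\<not> b < x T i"
proof
  assume "b < x T i"
  define H where "H = {i \<in> {1..<N}. b < x T i}"
  have H_sub: "H \<subseteq> {1..N}" and "N \<notin> H" and "i \<in> H"
    using i \<open>b < x T i\<close> unfolding H_def by auto
  moreover have "(i, N) \<in> (integral_edges N \<alpha>)\<^sup>*"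
    using connected i two_le_N unfolding integrally_connected_def by auto
  ultimately obtain p q where pq: "(p, q) \<in> integral_edges N \<alpha>" "p \<in> H" "q \<notin> H"
    using rtrancl_leaves_set by metis
  then have p: "p \<in> {1..N}" and q: "q \<in> {1..N} - H"
    and infinite: "(\<integral>\<^sup>+ t. ennreal (\<alpha> p q t) * indicator {0..} t \<partial>lborel) = \<infinity>"
    unfolding integral_edges_def by auto
  have stays_above: "b < x t j" if "T \<le> t" "j \<in> H" for t j
    using gap_side_invariant[OF T ab(2) gap that(1)] that(2) unfolding H_def by auto
  have y_above: "b < y t j" if "T \<le> t" "j \<in> H" for t j
    using stays_above[OF that] s_bounds_below_N[of j] s_bounds[of j] that ab
    by (auto simp: H_def sat_eq_clamp)
  have y_below: "y t j < a" if "T \<le> t" "j \<in> {1..N} - H" for t j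
  proof (cases "j = N")
    case True
    then show ?thesis
      using abs_sat_le[OF s_pos, of "x t N"] ab by auto
  next
    case False
    with that have j: "j \<in> {1..<N}" and "\<not> b < x T j"
      unfolding H_def by auto
    then have "x t j < a"
      using gap_side_invariant[OF T ab(2) gap that(1) j] gap[OF that(1) j] by auto
    then show ?thesis
      using s_bounds[of j] j ab s_pos by (auto simp: sat_eq_clamp)
  qed
  define \<kappa> where "\<kappa> = 1 / (b - a)"
  have "0 < \<kappa>"
    unfolding \<kappa>_def using ab by simp
  define h where "h \<tau> = (\<Sum>j\<in>H. - \<kappa> * rhs j \<tau>)" for \<tau>
  have "(\<integral>\<^sup>+ t. ennreal (\<alpha> p q t) * indicator {0..} t \<partial>lborel) < \<infinity>"
  proof (rule nn_integral_Ici_finite_if_dominated)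
    show "\<alpha> p q t \<le> amax" if "0 \<le> t" "t \<le> T" for t
      using \<alpha>_le[OF p _ that(1)] q by auto
    show dominated: "\<alpha> p q \<tau> \<le> h \<tau>" if "T < \<tau>" for \<tau>
    proof -
      have "0 \<le> \<tau>"
        using that T t0_nonneg by linarith
      have "y \<tau> k - y \<tau> j \<le> - (b - a)" if "j \<in> H" "k \<in> {1..N} - H" for j k
        using y_above[of \<tau> j] y_below[of \<tau> k] that \<open>T < \<tau>\<close> by auto
      then have "(\<Sum>j\<in>H. rhs j \<tau>) \<le> - (b - a) * \<alpha> p q \<tau>"
        using ab by (intro separated_set_drift[OF H_sub pq(2) q \<open>0 \<le> \<tau>\<close>]) auto
      then have "\<kappa> * ((b - a) * \<alpha> p q \<tau>) \<le> \<kappa> * (- (\<Sum>j\<in>H. rhs j \<tau>))"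
        using \<open>0 < \<kappa>\<close> by (intro mult_left_mono) (auto simp: algebra_simps)
      moreover have "\<kappa> * ((b - a) * \<alpha> p q \<tau>) = \<alpha> p q \<tau>"
        unfolding \<kappa>_def using ab by simp
      moreover have "h \<tau> = \<kappa> * (- (\<Sum>j\<in>H. rhs j \<tau>))"
        unfolding h_def by (simp add: sum_distrib_left sum_negf)
      ultimately show ?thesis
        by simp
    qed
    show "0 \<le> h \<tau>" if "T < \<tau>" for \<tau>
    proof -
      have "0 \<le> \<alpha> p q \<tau>"
        using \<alpha>_nonneg[OF p] q that T t0_nonneg by auto
      then show ?thesis
        using dominated[OF that] by linarith
    qed
    show "set_integrable lborel {T<..T + real n} h" for n :: nat
      unfolding h_def using weighted_increment_eq_integral(1)[OF T _ H_sub, of "T + real n" "\<lambda>_. - \<kappa>"]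
      by simp
    show "(LINT t:{T<..T + real n}|lborel. h t) \<le> (\<Sum>j\<in>H. \<kappa> * (x T j - b))" for n :: nat
    proof -
      have "(LINT t:{T<..T + real n}|lborel. h t) = (\<Sum>j\<in>H. - \<kappa> * (x (T + real n) j - x T j))"
        unfolding h_def using weighted_increment_eq_integral(2)[OF T _ H_sub, of "T + real n" "\<lambda>_. - \<kappa>"]
        by simp
      also have "\<dots> \<le> (\<Sum>j\<in>H. \<kappa> * (x T j - b))"
        using stays_above[of "T + real n"] \<open>0 < \<kappa>\<close>
        by (intro sum_mono) (simp add: algebra_simps less_imp_le)
      finally show ?thesis .
    qed
  qed
  with infinite show False
    by simp
qed

lemma eventually_below:
  assumes "s N < c" "c \<le> s (N - 1)"
  shows "\<forall>\<^sub>F t in at_top. \<forall>i\<in>{1..<N}. x t i < c"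
proof -
  obtain a b where ab: "s N < a" "a < b" "b < c"
    and "\<forall>\<^sub>F t in at_top. \<forall>i\<in>{1..<N}. x t i < a \<or> b < x t i"
    using eventually_gap[OF assms] by blast
  then obtain T0 where T0: "\<And>t i. T0 \<le> t \<Longrightarrow> i \<in> {1..<N} \<Longrightarrow> x t i < a \<or> b < x t i"
    unfolding eventually_at_top_linorder by blast
  define T where "T = max T0 t0"
  have T: "t0 \<le> T"
    unfolding T_def by simp
  have gap: "\<And>t i. T \<le> t \<Longrightarrow> i \<in> {1..<N} \<Longrightarrow> x t i < a \<or> b < x t i"
    using T0 unfolding T_def by auto
  have "x t i < c" if "T \<le> t" "i \<in> {1..<N}" for t i
  proof -
    have "\<not> b < x T i"
      using nothing_above_gap[OF T ab(1,2) _ gap that(2)] ab(3) assms(2) by linarith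
    then have "\<not> b < x t i"
      using gap_side_invariant[OF T ab(2) gap that] by simp
    then show ?thesis
      using gap[OF that] ab by auto
  qed
  then show ?thesis
    unfolding eventually_at_top_linorder by blast
qed

end

lemma caratheodory_solution_uminus:
  assumes "caratheodory_solution N \<alpha> s t0 x"
  shows "caratheodory_solution N \<alpha> s t0 (\<lambda>t i. - x t i)"
proof -
  have rhs: "agent_rhs N \<alpha> s (\<lambda>t i. - x t i) i = (\<lambda>\<tau>. - agent_rhs N \<alpha> s x i \<tau>)" for i
    unfolding agent_rhs_def by (auto simp: sat_uminus sum_negf[symmetric] algebra_simps)
  show ?thesis
    unfolding caratheodory_solution_def rhs
  proof (intro ballI allI impI conjI)
    fix i t
    assume "i \<in> {1..N}" "t0 \<le> t"
    then have integrable: "set_integrable lborel {t0..t} (agent_rhs N \<alpha> s x i)"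
      and eq: "x t i = x t0 i + (LINT \<tau>:{t0..t}|lborel. agent_rhs N \<alpha> s x i \<tau>)"
      using assms unfolding caratheodory_solution_def by blast+
    have "set_integrable lborel {t0..t} (\<lambda>\<tau>. - 1 * agent_rhs N \<alpha> s x i \<tau>)"
      using integrable by blast
    then show "set_integrable lborel {t0..t} (\<lambda>\<tau>. - agent_rhs N \<alpha> s x i \<tau>)"
      by simp
    show "- x t i = - x t0 i + (LINT \<tau>:{t0..t}|lborel. - agent_rhs N \<alpha> s x i \<tau>)"
      using eq set_integral_uminus[OF integrable] by simp
  qed
qed

lemma (in saturated_network) saturated_network_uminus:
  "saturated_network N s \<alpha> amax t0 (\<lambda>t i. - x t i)"
  by unfold_locales
    (fact two_le_N s_decreasing s_pos \<alpha>_sym \<alpha>_nonneg \<alpha>_le connected t0_nonneg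
      caratheodory_solution_uminus[OF solution])+

lemma eventually_abs_below:
  assumes "saturated_network N s \<alpha> amax t0 x" "s N < c"
  shows "\<forall>\<^sub>F t in at_top. \<forall>i\<in>{1..<N}. \<bar>x t i\<bar> < c"
proof -
  interpret pos: saturated_network N s \<alpha> amax t0 x
    by (fact assms(1))
  interpret neg: saturated_network N s \<alpha> amax t0 "\<lambda>t i. - x t i"
    by (fact pos.saturated_network_uminus)
  have "s N < min c (s (N - 1))"
    using assms(2) pos.s_decreasing[of "N - 1" N] pos.two_le_N by auto
  then have "\<forall>\<^sub>F t in at_top. (\<forall>i\<in>{1..<N}. x t i < min c (s (N - 1)))
      \<and> (\<forall>i\<in>{1..<N}. - x t i < min c (s (N - 1)))"
    by (intro eventually_conj pos.eventually_below neg.eventually_below) auto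
  then show ?thesis
    by eventually_elim (force simp: abs_less_iff)
qed

lemma Limsup_le_if_eventually_less:
  fixes f :: "'a \<Rightarrow> real"
  assumes "\<And>c. a < c \<Longrightarrow> \<forall>\<^sub>F t in F. f t < c"
  shows "Limsup F (\<lambda>t. ereal (f t)) \<le> ereal a"
  unfolding Limsup_le_iff
proof (intro allI impI)
  fix r :: ereal
  assume "ereal a < r"
  then obtain c where "a < c" "ereal c < r"
    by (metis ereal_dense2 less_ereal.simps(1))
  from assms[OF \<open>a < c\<close>] show "\<forall>\<^sub>F t in F. ereal (f t) < r"
  proof eventually_elim
    case (elim t)
    then have "ereal (f t) < ereal c"
      by simp
    then show ?case
      using \<open>ereal c < r\<close> by (rule order.strict_trans)
  qed
qed

theorem lemma7:
  fixes N :: nat and s :: "nat \<Rightarrow> real" and \<alpha> :: "nat \<Rightarrow> nat \<Rightarrow> real \<Rightarrow> real"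
    and \<alpha>min \<alpha>max t0 :: real and x :: "real \<Rightarrow> nat \<Rightarrow> real"
  assumes N: "N \<ge> 1"
    and s_dec: "\<And>i j. 1 \<le> i \<Longrightarrow> i < j \<Longrightarrow> j \<le> N \<Longrightarrow> s j < s i"
    and s_pos: "s N > 0"
    and sa: "standing_assumptions N \<alpha>"
    and ic: "integrally_connected N \<alpha>"
    and amin: "0 < \<alpha>min" and aminmax: "\<alpha>min \<le> \<alpha>max"
    and abnd: "\<And>i j t. i \<in> {1..N} \<Longrightarrow> j \<in> {1..N} \<Longrightarrow> t \<ge> 0 \<Longrightarrow>
                 \<alpha> i j t = 0 \<or> (\<alpha>min \<le> \<alpha> i j t \<and> \<alpha> i j t \<le> \<alpha>max)"
    and t0: "t0 \<ge> 0"
    and sol: "caratheodory_solution N \<alpha> s t0 x"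
  shows "(\<exists>T\<ge>t0. \<forall>i\<in>{1..<N}. \<forall>t\<ge>T. - s i < x t i \<and> x t i < s i) \<and>
         (\<forall>i\<in>{1..<N}. Limsup at_top (\<lambda>t::real. ereal \<bar>x t i\<bar>) \<le> ereal (s N))"
proof (cases "N = 1")
  case False
  have "\<alpha> i j t = \<alpha> j i t" "0 \<le> \<alpha> i j t"
    if "i \<in> {1..N}" "j \<in> {1..N}" "0 \<le> t" for i j t
    using sa that unfolding standing_assumptions_def by auto
  moreover have "\<alpha> i j t \<le> \<alpha>max" if "i \<in> {1..N}" "j \<in> {1..N}" "0 \<le> t" for i j t
    using abnd[OF that] amin aminmax by auto
  moreover have "2 \<le> N"
    using False N by simp
  ultimately have net: "saturated_network N s \<alpha> \<alpha>max t0 x"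
    using s_dec s_pos ic t0 sol by unfold_locales blast+
  have "s N < s (N - 1)"
    using s_dec[of "N - 1" N] \<open>2 \<le> N\<close> by auto
  then obtain T where T: "\<And>t i. T \<le> t \<Longrightarrow> i \<in> {1..<N} \<Longrightarrow> \<bar>x t i\<bar> < s (N - 1)"
    using eventually_abs_below[OF net] unfolding eventually_at_top_linorder by blast
  have "\<forall>i\<in>{1..<N}. \<forall>t\<ge>max T t0. - s i < x t i \<and> x t i < s i"
    using T saturated_network.s_bounds_below_N[OF net] by fastforce
  moreover have "Limsup at_top (\<lambda>t. ereal \<bar>x t i\<bar>) \<le> ereal (s N)" if "i \<in> {1..<N}" for i
  proof (rule Limsup_le_if_eventually_less)
    fix c
    assume "s N < c"
    from eventually_abs_below[OF net this] show "\<forall>\<^sub>F t in at_top. \<bar>x t i\<bar> < c"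
      by eventually_elim (use that in auto)
  qed
  ultimately show ?thesis
    by (intro conjI exI[of _ "max T t0"]) auto
qed auto

end
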